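(* Let $x,y\in\mathbb{B}^2\setminus\{0\}$ be such that $0,x,y$ are noncollinear and $|x|\ne|y|$. Let $S^1(a,r_a)$ be the circle through $x,y,x^*,y^*$ (it is orthogonal to $S^1$), let $\{x_*,y_*\}=S^1\cap S^1(a,r_a)$ labelled so that $x_*,x,y,y_*$ occur in this order on the arc of $S^1(a,r_a)$ inside $\overline{\mathbb{B}^2}$, and let $\sigma$ be the arc of $S^1(a,r_a)$ with endpoints $x^*,y^*$ containing $x,y$. Let $S^1(c,r_c)$ be the circle through $0,x,y$, let $z$ be the point of $L(0,c)\cap S^1(a,r_a)$ in $\mathbb{B}^2$ and $z'$ the point of $L(0,c)\cap S^1(a,r_a)$ in $\mathbb{R}^2\setminus\mathbb{B}^2$. Let $b=L(x_*,y)\cap L(x,y^* )$, $d=L(x^*,y)\cap L(x_*,y^* )$, $b'=L(x,y_* )\cap L(x^*,y)$, $d'=L(x,y^* )\cap L(x^*,y_* )$. Then: (1) if $\sigma$ is a semicircle, then $z$ is the hyperbolic midpoint of the hyperbolic segment $J[x,y]$, the circle $S^1(c,r_c)$ is orthogonal to $S^1(a,r_a)$, and $|z,x,x^*,z'|=|z,y,y^*,z'|$; (2) the points $0,b,d$ are collinear, and the points $0,b',d'$ are collinear.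
   Context: $\mathbb{B}^2$ is the unit disk, $S^1$ the unit circle, $S^1(c,r)$ the circle with centre $c$ and radius $r$, $L(p,q)$ the line through $p,q$; $x^*=x/|x|^2$. For distinct points $p,q,r,s\in\mathbb{R}^2$ the absolute ratio is $|p,q,r,s|=\frac{|p-r||q-s|}{|p-q||r-s|}$. The hyperbolic distance on $\mathbb{B}^2$ satisfies $\sinh\frac{\rho(x,y)}{2}=\frac{|x-y|}{\sqrt{1-|x|^2}\sqrt{1-|y|^2}}$; $J[x,y]$ is the arc of $S^1(a,r_a)$ between $x$ and $y$, and its hyperbolic midpoint is the $z\in J[x,y]$ with $\rho(x,z)=\rho(z,y)$. *)

theory Defs
  imports "HOL-Analysis.Analysis"
begin

definition inv_pt :: "complex \<Rightarrow> complex" where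
  "inv_pt x = x / complex_of_real ((cmod x)\<^sup>2)"

definition cross :: "complex \<Rightarrow> complex \<Rightarrow> real" where
  "cross p q = Im (cnj p * q)"

definition abs_ratio :: "complex \<Rightarrow> complex \<Rightarrow> complex \<Rightarrow> complex \<Rightarrow> real" where
  "abs_ratio p q r s = (cmod (p - r) * cmod (q - s)) / (cmod (p - q) * cmod (r - s))"

definition hdist :: "complex \<Rightarrow> complex \<Rightarrow> real" where
  "hdist x y = 2 * arsinh (cmod (x - y) / (sqrt (1 - (cmod x)\<^sup>2) * sqrt (1 - (cmod y)\<^sup>2)))"

text \<open>J[x,y]: the arc of the circle sphere a r between x and y that lies in the
  unit disk, i.e. the closed arc cut off by the chord L(x,y) on the side opposite to
  the inverse point x* (which lies on the complementary arc).\<close>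
definition hyp_seg :: "complex \<Rightarrow> real \<Rightarrow> complex \<Rightarrow> complex \<Rightarrow> complex set" where
  "hyp_seg a r x y = {w \<in> sphere a r.
      cross (y - x) (w - x) * cross (y - x) (inv_pt x - x) \<le> 0}"

definition is_hyp_midpoint :: "complex \<Rightarrow> real \<Rightarrow> complex \<Rightarrow> complex \<Rightarrow> complex \<Rightarrow> bool" where
  "is_hyp_midpoint a r x y z \<longleftrightarrow> z \<in> hyp_seg a r x y \<and> hdist x z = hdist z y"

end

theory Submission
  imports Defs
begin

text \<open>
  Everything rests on one identity: a circle \<open>S\<^sup>1(a,r)\<close> containing a point \<open>p\<close> and its
  inverse \<open>p\<^sup>*\<close> is orthogonal to the unit circle, i.e. \<open>|a|\<^sup>2 = r\<^sup>2 + 1\<close>, and its points are exactly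
  the solutions of \<open>|p|\<^sup>2 + 1 = 2\<langle>a,p\<rangle>\<close>.

  Collinearity: for \<open>b\<close> on the chord \<open>pq\<close> of such a circle, the point \<open>b / (2\<langle>a,b\<rangle> - 1)\<close> lies on
  the line \<open>L(p\<^sup>*,q\<^sup>*)\<close>. So if \<open>b = L(p,q) \<inter> L(m,n)\<close> and \<open>d = L(p\<^sup>*,q\<^sup>*) \<inter> L(m\<^sup>*,n\<^sup>*)\<close>, then
  \<open>b = (2\<langle>a,b\<rangle> - 1) d\<close>. Taking \<open>(p,q,m,n)\<close> to be \<open>(x\<^sub>*, y, x, y\<^sup>*)\<close> resp. \<open>(x, y\<^sub>*, x\<^sup>*, y)\<close> and
  using \<open>x\<^sub>*\<^sup>* = x\<^sub>*\<close>, \<open>y\<^sub>*\<^sup>* = y\<^sub>*\<close> gives both collinearities.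

  Semicircle case: the circle through \<open>0\<close> with centre \<open>c\<close> is \<open>|p|\<^sup>2 = 2\<langle>c,p\<rangle>\<close>, and
  \<open>a = (x\<^sup>* + y\<^sup>*)/2\<close> gives \<open>2\<langle>a,c\<rangle> = 1\<close>, which is the orthogonality of the two circles. Then \<open>t c\<close>
  lies on \<open>S\<^sup>1(a,r\<^sub>a)\<close> iff \<open>t\<^sup>2|c|\<^sup>2 = t - 1\<close>, and for every point \<open>p \<noteq> 0\<close> of \<open>S\<^sup>1(c,r\<^sub>c)\<close> one has
  \<open>|p - t c|\<^sup>2 = (1 - |p|\<^sup>2)(t - 1)\<close> and \<open>|p\<^sup>* - t c|\<^sup>2 = 1/|p|\<^sup>2 - 1\<close>. Hence \<open>\<rho>(p, z)\<close> and
  \<open>|z,p,p\<^sup>*,z'|\<close> do not depend on \<open>p\<close>. That \<open>z\<close> lies between \<open>x\<close> and \<open>y\<close> is a sign computation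
  with \<open>\<langle>x,y\<rangle> = |x|\<^sup>2|y|\<^sup>2\<close> and the explicit smaller root \<open>t = 2/(1 + \<surd>(1 - 4|c|\<^sup>2))\<close>.
\<close>

lemma cross_complex: "cross p q = Re p * Im q - Im p * Re q"
  by (simp add: cross_def)

lemma cross_mult_cross: "cross p q * cross r s = (p \<bullet> r) * (q \<bullet> s) - (p \<bullet> s) * (q \<bullet> r)"
  by (simp add: cross_complex inner_complex_def algebra_simps)

lemma cross_eq_0_imp_scaleR:
  assumes "cross e v = 0" "e \<noteq> 0"
  shows "v = ((e \<bullet> v) / (cmod e)\<^sup>2) *\<^sub>R e"
proof -
  have "(cmod e)\<^sup>2 \<noteq> 0" using assms(2) by simp
  then show ?thesis
    using assms(1) by (simp add: complex_eq_iff cross_complex inner_complex_def cmod_power2 field_simps)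
      (simp add: algebra_simps power2_eq_square)
qed

lemma collinear_0_iff_cross: "collinear {0, b, d} \<longleftrightarrow> cross b d = 0"
proof
  assume "cross b d = 0"
  then show "collinear {0, b, d}"
    using cross_eq_0_imp_scaleR by (cases "b = 0") (auto simp: collinear_lemma)
qed (auto simp: collinear_lemma cross_complex)

lemma mem_affine_hull_2_imp_cross_eq_0: "m \<in> affine hull {p, q} \<Longrightarrow> cross (q - p) (m - p) = 0"
  by (auto simp: affine_hull_2_alt cross_complex algebra_simps)

section \<open>Inversion and circles orthogonal to the unit circle\<close>

lemma inv_pt_scaleR: "inv_pt p = inverse ((cmod p)\<^sup>2) *\<^sub>R p"
  by (simp add: inv_pt_def scaleR_conv_of_real divide_inverse mult.commute)

lemma norm_inv_pt: "cmod (inv_pt p) = inverse (cmod p)"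
  by (cases "p = 0") (simp_all add: inv_pt_scaleR power2_eq_square)

lemma inner_inv_pt_right: "a \<bullet> inv_pt p = (a \<bullet> p) / (cmod p)\<^sup>2"
  by (simp add: inv_pt_scaleR divide_inverse mult.commute)

lemma inv_pt_inv_pt [simp]: "inv_pt (inv_pt p) = p"
proof -
  have "inv_pt (inv_pt p) = (cmod p)\<^sup>2 *\<^sub>R inv_pt p"
    by (simp only: inv_pt_scaleR[of "inv_pt p"] norm_inv_pt power_inverse inverse_inverse_eq)
  then show ?thesis
    by (cases "p = 0") (simp_all add: inv_pt_scaleR)
qed

lemma inv_pt_eq_iff: "inv_pt p = inv_pt q \<longleftrightarrow> p = q"
  by (metis inv_pt_inv_pt)

lemma inv_pt_unit: "cmod p = 1 \<Longrightarrow> inv_pt p = p"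
  by (simp add: inv_pt_def)

lemma mem_sphere_inner: "p \<in> sphere a r \<longleftrightarrow> r \<ge> 0 \<and> (cmod p)\<^sup>2 - 2 * (a \<bullet> p) + (cmod a)\<^sup>2 = r\<^sup>2"
proof -
  have "(dist a p)\<^sup>2 = (cmod p)\<^sup>2 - 2 * (a \<bullet> p) + (cmod a)\<^sup>2"
    by (simp add: dist_norm cmod_power2 inner_complex_def) (simp add: power2_eq_square algebra_simps)
  then show ?thesis
    by (metis mem_sphere power2_eq_iff_nonneg zero_le_dist)
qed

lemma sphere_orthogonal_unit_circle:
  assumes "p \<in> sphere a r" "inv_pt p \<in> sphere a r" "p \<noteq> 0" "cmod p \<noteq> 1"
  shows "(cmod a)\<^sup>2 = r\<^sup>2 + 1"
proof -
  define u where "u = (cmod p)\<^sup>2"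
  have "u \<noteq> 0" "u \<noteq> 1" using assms(3,4) by (simp_all add: u_def abs_square_eq_1)
  have p: "u - 2 * (a \<bullet> p) + (cmod a)\<^sup>2 = r\<^sup>2"
    using assms(1) unfolding mem_sphere_inner u_def by simp
  have "1 / u - 2 * (a \<bullet> p) / u + (cmod a)\<^sup>2 = r\<^sup>2"
    using assms(2) unfolding mem_sphere_inner norm_inv_pt inner_inv_pt_right u_def
    by (simp add: power_inverse divide_inverse)
  then have "1 - 2 * (a \<bullet> p) + u * (cmod a)\<^sup>2 = u * r\<^sup>2"
    using \<open>u \<noteq> 0\<close> by (simp add: field_simps)
  with p have "(u - 1) * ((cmod a)\<^sup>2 - r\<^sup>2 - 1) = 0"
    by (simp add: algebra_simps)
  with \<open>u \<noteq> 1\<close> show ?thesis by simp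
qed

lemma mem_orthogonal_sphere:
  assumes "(cmod a)\<^sup>2 = r\<^sup>2 + 1" "r \<ge> 0"
  shows "p \<in> sphere a r \<longleftrightarrow> (cmod p)\<^sup>2 + 1 = 2 * (a \<bullet> p)"
  using assms unfolding mem_sphere_inner by auto

lemma zero_notin_orthogonal_sphere:
  assumes "(cmod a)\<^sup>2 = r\<^sup>2 + 1"
  shows "0 \<notin> sphere a r"
  using assms unfolding mem_sphere_inner by auto

lemma inv_pt_mem_orthogonal_sphere:
  assumes orth: "(cmod a)\<^sup>2 = r\<^sup>2 + 1" and p: "p \<in> sphere a r"
  shows "inv_pt p \<in> sphere a r"
proof -
  have r: "r \<ge> 0" using p by auto
  have "p \<noteq> 0" using p zero_notin_orthogonal_sphere[OF orth] by auto
  moreover have "(cmod p)\<^sup>2 + 1 = 2 * (a \<bullet> p)" using p mem_orthogonal_sphere[OF orth r] by simp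
  ultimately have "(cmod (inv_pt p))\<^sup>2 + 1 = 2 * (a \<bullet> inv_pt p)"
    by (simp add: norm_inv_pt inner_inv_pt_right power_inverse field_simps)
  then show ?thesis using mem_orthogonal_sphere[OF orth r] by simp
qed

lemma sphere_three_points_cross_ne_0:
  assumes "{p, q, m} \<subseteq> sphere a r" "distinct [p, q, m]"
  shows "cross (q - p) (m - p) \<noteq> 0"
proof
  define e where "e = q - p"
  have "e \<noteq> 0" using assms(2) by (auto simp: e_def)
  assume "cross (q - p) (m - p) = 0"
  then have "m - p = ((e \<bullet> (m - p)) / (cmod e)\<^sup>2) *\<^sub>R e"
    using cross_eq_0_imp_scaleR \<open>e \<noteq> 0\<close> by (simp add: e_def)
  then obtain t where "m - p = t *\<^sub>R e" by blast
  then have m: "m = p + t *\<^sub>R e" by (simp add: algebra_simps)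
  have expand: "(dist a (p + s *\<^sub>R e))\<^sup>2 = (dist a p)\<^sup>2 + s * (2 * ((p - a) \<bullet> e)) + s\<^sup>2 * (cmod e)\<^sup>2"
    for s by (simp add: dist_norm cmod_power2 inner_complex_def) (simp add: power2_eq_square algebra_simps)
  have "dist a p = r" "dist a (p + 1 *\<^sub>R e) = r" "dist a (p + t *\<^sub>R e) = r"
    using assms(1) m by (auto simp: e_def)
  then have k: "2 * ((p - a) \<bullet> e) = - (cmod e)\<^sup>2"
    and t: "t * (2 * ((p - a) \<bullet> e)) + t\<^sup>2 * (cmod e)\<^sup>2 = 0"
    using expand[of 1] expand[of t] by simp_all
  have "t * (t - 1) * (cmod e)\<^sup>2 = t * (2 * ((p - a) \<bullet> e)) + t\<^sup>2 * (cmod e)\<^sup>2"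
    unfolding k by (simp add: power2_eq_square algebra_simps)
  with t \<open>e \<noteq> 0\<close> have "t = 0 \<or> t = 1" by simp
  then show False using assms(2) m by (auto simp: e_def)
qed

section \<open>Chords and inverse chords of an orthogonal circle\<close>

lemma cross_eq_0_independent_imp_0:
  assumes "cross e v = 0" "cross f v = 0" "cross e f \<noteq> 0"
  shows "v = 0"
proof -
  have "cross e f * Re v = 0" "cross e f * Im v = 0"
    using assms(1,2) unfolding cross_complex by algebra+
  then show ?thesis using assms(3) by (simp add: complex_eq_iff)
qed

lemma chord_point_on_scaled_inverse_chord:
  assumes orth: "(cmod a)\<^sup>2 = r\<^sup>2 + 1" and "p \<in> sphere a r" "q \<in> sphere a r"
    and b: "b \<in> affine hull {p, q}"
  shows "cross (inv_pt q - inv_pt p) (b - (2 * (a \<bullet> b) - 1) *\<^sub>R inv_pt p) = 0"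
proof -
  have r: "r \<ge> 0" using assms(2) by auto
  define u w where "u = (cmod p)\<^sup>2" and "w = (cmod q)\<^sup>2"
  have "p \<noteq> 0" "q \<noteq> 0" using assms(2,3) zero_notin_orthogonal_sphere[OF orth] by auto
  then have "u \<noteq> 0" "w \<noteq> 0" by (simp_all add: u_def w_def)
  have "u + 1 = 2 * (a \<bullet> p)" "w + 1 = 2 * (a \<bullet> q)"
    using assms(2,3) mem_orthogonal_sphere[OF orth r] by (simp_all add: u_def w_def)
  obtain v where b: "b = p + v *\<^sub>R (q - p)" using b by (auto simp: affine_hull_2_alt)
  have "2 * (a \<bullet> b) - 1 = (2 * (a \<bullet> p) - 1) + v * (2 * (a \<bullet> q) - 2 * (a \<bullet> p))"
    by (simp add: b inner_add_right inner_diff_right algebra_simps)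
  also have "\<dots> = (1 - v) * u + v * w"
    unfolding \<open>u + 1 = _\<close>[symmetric] \<open>w + 1 = _\<close>[symmetric] by (simp add: algebra_simps)
  finally have L: "2 * (a \<bullet> b) - 1 = (1 - v) * u + v * w" .
  show ?thesis
    using \<open>u \<noteq> 0\<close> \<open>w \<noteq> 0\<close> unfolding L
    by (simp add: b inv_pt_scaleR cross_complex u_def[symmetric] w_def[symmetric] field_simps)
qed

lemma collinear_0_chord_intersections:
  assumes orth: "(cmod a)\<^sup>2 = r\<^sup>2 + 1"
    and on: "{p, q, m, n} \<subseteq> sphere a r" and dist: "distinct [p, q, m]" "m \<noteq> n"
    and b: "b \<in> affine hull {p, q} \<inter> affine hull {m, n}"
    and d: "d \<in> affine hull {inv_pt p, inv_pt q} \<inter> affine hull {inv_pt m, inv_pt n}"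
  shows "collinear {0, b, d}"
proof -
  define P Q M N where "P = inv_pt p" and "Q = inv_pt q" and "M = inv_pt m" and "N = inv_pt n"
  define L where "L = 2 * (a \<bullet> b) - 1"
  have b_PQ: "cross (Q - P) (b - L *\<^sub>R P) = 0" and b_MN: "cross (N - M) (b - L *\<^sub>R M) = 0"
    using chord_point_on_scaled_inverse_chord[OF orth] on b by (auto simp: P_def Q_def M_def N_def L_def)
  have d_PQ: "cross (Q - P) (d - P) = 0" and d_MN: "cross (N - M) (d - M) = 0"
    using d mem_affine_hull_2_imp_cross_eq_0 by (auto simp: P_def Q_def M_def N_def)
  have "cross (Q - P) (N - M) \<noteq> 0"
    \<comment> \<open>otherwise both lines through \<open>d\<close> coincide, and \<open>P\<close>, \<open>Q\<close>, \<open>M\<close> on a circle would be collinear\<close>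
  proof
    assume par: "cross (Q - P) (N - M) = 0"
    have "N - M \<noteq> 0" using dist by (simp add: M_def N_def inv_pt_eq_iff)
    then obtain s where "d - M = s *\<^sub>R (N - M)"
      using cross_eq_0_imp_scaleR[OF d_MN] by blast
    then have d_eq: "d = M + s *\<^sub>R (N - M)" by (simp add: algebra_simps)
    have "cross (Q - P) (d - P) = cross (Q - P) (M - P) + s * cross (Q - P) (N - M)"
      unfolding d_eq by (simp add: cross_complex algebra_simps)
    with par have "cross (Q - P) (M - P) = cross (Q - P) (d - P)" by simp
    moreover have "{P, Q, M} \<subseteq> sphere a r"
      using on inv_pt_mem_orthogonal_sphere[OF orth] by (auto simp: P_def Q_def M_def)
    ultimately show False
      using sphere_three_points_cross_ne_0 dist d_PQ by (auto simp: P_def Q_def M_def inv_pt_eq_iff)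
  qed
  moreover have "cross (Q - P) (b - L *\<^sub>R d) = 0" "cross (N - M) (b - L *\<^sub>R d) = 0"
  proof -
    have shift: "cross e (b - L *\<^sub>R d) = cross e (b - L *\<^sub>R x) - L * cross e (d - x)" for e x
      by (simp add: cross_complex algebra_simps)
    show "cross (Q - P) (b - L *\<^sub>R d) = 0" "cross (N - M) (b - L *\<^sub>R d) = 0"
      using shift[of "Q - P" P] shift[of "N - M" M] b_PQ b_MN d_PQ d_MN by simp_all
  qed
  ultimately have "b = L *\<^sub>R d"
    using cross_eq_0_independent_imp_0 by fastforce
  then show ?thesis
    by (simp add: collinear_0_iff_cross cross_complex)
qed

lemma sphere_through_0_inner:
  assumes "0 \<in> sphere c r" "p \<in> sphere c r"
  shows "(cmod p)\<^sup>2 = 2 * (c \<bullet> p)"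
  using assms unfolding mem_sphere_inner by simp

lemma inner_inv_pt_circle_through_0:
  assumes "p \<noteq> 0" "(cmod p)\<^sup>2 = 2 * (c \<bullet> p)"
  shows "2 * (c \<bullet> inv_pt p) = 1"
proof -
  have "(cmod p)\<^sup>2 \<noteq> 0" using assms(1) by simp
  then show ?thesis by (simp add: inner_inv_pt_right assms(2))
qed

lemma norm_diff_line_point:
  assumes "(cmod p)\<^sup>2 = 2 * (c \<bullet> p)" "t\<^sup>2 * (cmod c)\<^sup>2 = t - 1"
  shows "cmod (p - t *\<^sub>R c) = sqrt (1 - (cmod p)\<^sup>2) * sqrt (t - 1)"
proof -
  have "(cmod (p - t *\<^sub>R c))\<^sup>2 = (cmod p)\<^sup>2 - t * (2 * (c \<bullet> p)) + t\<^sup>2 * (cmod c)\<^sup>2"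
    by (simp add: cmod_power2 inner_complex_def) (simp add: power2_eq_square algebra_simps)
  also have "\<dots> = (1 - (cmod p)\<^sup>2) * (t - 1)"
    using assms by (simp add: algebra_simps)
  finally have "sqrt ((cmod (p - t *\<^sub>R c))\<^sup>2) = sqrt ((1 - (cmod p)\<^sup>2) * (t - 1))"
    by simp
  then show ?thesis
    by (simp add: real_sqrt_mult)
qed

lemma norm_inv_pt_diff_line_point:
  assumes "p \<noteq> 0" "(cmod p)\<^sup>2 = 2 * (c \<bullet> p)" "t\<^sup>2 * (cmod c)\<^sup>2 = t - 1"
  shows "cmod (inv_pt p - t *\<^sub>R c) = sqrt (1 / (cmod p)\<^sup>2 - 1)"
proof -
  have "(cmod (inv_pt p - t *\<^sub>R c))\<^sup>2
      = (cmod (inv_pt p))\<^sup>2 - t * (2 * (c \<bullet> inv_pt p)) + t\<^sup>2 * (cmod c)\<^sup>2"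
    by (simp add: cmod_power2 inner_complex_def) (simp add: power2_eq_square algebra_simps)
  also have "\<dots> = 1 / (cmod p)\<^sup>2 - t + (t - 1)"
    using inner_inv_pt_circle_through_0[OF assms(1,2)] assms(3)
    by (simp add: norm_inv_pt power_inverse inverse_eq_divide power_one_over)
  finally have "sqrt ((cmod (inv_pt p - t *\<^sub>R c))\<^sup>2) = sqrt (1 / (cmod p)\<^sup>2 - 1)"
    by simp
  then show ?thesis
    by simp
qed

lemma hdist_commute: "hdist p q = hdist q p"
  by (simp add: hdist_def norm_minus_commute mult.commute)

lemma hdist_line_point:
  assumes "cmod p < 1" "(cmod p)\<^sup>2 = 2 * (c \<bullet> p)" "t\<^sup>2 * (cmod c)\<^sup>2 = t - 1"
  shows "hdist p (t *\<^sub>R c) = 2 * arsinh (sqrt (t - 1) / sqrt (2 - t))"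
proof -
  have "sqrt (1 - (cmod p)\<^sup>2) > 0" using assms(1) by (simp add: abs_square_less_1)
  moreover have z: "1 - (cmod (t *\<^sub>R c))\<^sup>2 = 2 - t"
    using assms(3) by (simp add: power_mult_distrib)
  ultimately show ?thesis
    unfolding hdist_def norm_diff_line_point[OF assms(2,3)] z by simp
qed

lemma abs_ratio_line_points:
  assumes "p \<noteq> 0" "cmod p < 1" "(cmod p)\<^sup>2 = 2 * (c \<bullet> p)"
    and t: "t\<^sup>2 * (cmod c)\<^sup>2 = t - 1" and s: "s\<^sup>2 * (cmod c)\<^sup>2 = s - 1"
  shows "abs_ratio (t *\<^sub>R c) p (inv_pt p) (s *\<^sub>R c) = sqrt (s - 1) / sqrt (t - 1)"
proof -
  have "(cmod p)\<^sup>2 < 1" "(cmod p)\<^sup>2 > 0" using assms(1,2) by (simp_all add: abs_square_less_1)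
  then have "sqrt (1 - (cmod p)\<^sup>2) > 0" "sqrt (1 / (cmod p)\<^sup>2 - 1) > 0" by simp_all
  then show ?thesis
    unfolding abs_ratio_def norm_minus_commute[of "t *\<^sub>R c"]
      norm_diff_line_point[OF assms(3) t] norm_diff_line_point[OF assms(3) s]
      norm_inv_pt_diff_line_point[OF assms(1,3) t] norm_inv_pt_diff_line_point[OF assms(1,3) s]
    by (simp add: field_simps)
qed

section \<open>The semicircle case\<close>

lemma quadratic_roots:
  fixes C t :: real
  assumes "0 < C" "4 * C < 1"
  defines "q \<equiv> sqrt (1 - 4 * C)"
  shows "t\<^sup>2 * C = t - 1 \<longleftrightarrow> t = 2 / (1 + q) \<or> t = 2 / (1 - q)"
proof -
  have "0 < q" "q < 1" using assms by (simp_all add: q_def)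
  have q2: "q\<^sup>2 = 1 - 4 * C" using assms(2) by (simp add: q_def)
  have "(t * (1 + q) - 2) * (t * (1 - q) - 2) = t\<^sup>2 * (1 - q\<^sup>2) - 4 * t + 4"
    by (simp add: power2_eq_square algebra_simps)
  also have "\<dots> = 4 * (t\<^sup>2 * C - (t - 1))"
    unfolding q2 by (simp add: algebra_simps)
  finally have "t\<^sup>2 * C = t - 1 \<longleftrightarrow> t * (1 + q) = 2 \<or> t * (1 - q) = 2"
    by auto
  also have "\<dots> \<longleftrightarrow> t = 2 / (1 + q) \<or> t = 2 / (1 - q)"
    using \<open>0 < q\<close> \<open>q < 1\<close> by (simp add: eq_divide_eq)
  finally show ?thesis .
qed

lemma small_root_bound:
  fixes u w C t :: real
  assumes "0 < u" "u < 1" "0 < w" "w < 1"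
    and C: "4 * C * (1 - u * w) = u + w - 2 * u * w"
    and t: "t\<^sup>2 * C = t - 1" "t < 2"
  shows "t * (2 - u - w) \<le> 2 * (1 - u * w)"
proof -
  define m e where "m = 1 - u * w" and "e = (1 - u) * (1 - w)"
  have "u * w < 1" using assms(1-4) mult_strict_mono[of u 1 w 1] by simp
  then have "0 < m" "0 < e" using assms(1-4) by (simp_all add: m_def e_def)
  have "m - e = u * (1 - w) + w * (1 - u)" by (simp add: m_def e_def algebra_simps)
  moreover have "u * (1 - w) > 0" "w * (1 - u) > 0" using assms(1-4) by simp_all
  ultimately have "e < m" by linarith
  define k where "k = e / m"
  have "0 < k" "k < 1" using \<open>0 < e\<close> \<open>e < m\<close> by (simp_all add: k_def)
  have k: "1 - 4 * C = k"
    using C \<open>0 < m\<close> by (simp add: k_def m_def e_def field_simps)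
  then have "0 < C" "4 * C < 1" using \<open>0 < k\<close> \<open>k < 1\<close> by simp_all
  have "2 / (1 - sqrt k) \<ge> 2" using \<open>0 < k\<close> \<open>k < 1\<close> by (simp add: le_divide_eq)
  then have "t = 2 / (1 + sqrt k)"
    using quadratic_roots[OF \<open>0 < C\<close> \<open>4 * C < 1\<close>] t k by auto
  also have "\<dots> \<le> 2 / (1 + k)"
  proof -
    have "k\<^sup>2 \<le> k" using \<open>0 < k\<close> \<open>k < 1\<close> by (simp add: power2_eq_square mult_left_le)
    then have "k \<le> sqrt k" using \<open>0 < k\<close> real_sqrt_le_mono by fastforce
    then show ?thesis using \<open>0 < k\<close> by (intro divide_left_mono) simp_all
  qed
  also have "\<dots> = 2 * m / (2 - u - w)"
    using \<open>0 < m\<close> by (simp add: k_def m_def e_def field_simps)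
  finally show ?thesis
    using \<open>0 < e\<close> \<open>e < m\<close> by (simp add: m_def e_def pos_le_divide_eq algebra_simps)
qed

text \<open>The arc \<open>\<sigma>\<close> is a semicircle iff its endpoints \<open>x\<^sup>*\<close>, \<open>y\<^sup>*\<close> are antipodal on \<open>S\<^sup>1(a,r\<^sub>a)\<close>.\<close>

locale semicircle_configuration =
  fixes a c x y :: complex and ra rc :: real
  assumes orth: "(cmod a)\<^sup>2 = ra\<^sup>2 + 1"
    and x_on: "x \<in> sphere a ra" and y_on: "y \<in> sphere a ra"
    and x_in: "cmod x < 1" and y_in: "cmod y < 1"
    and not_collinear: "\<not> collinear {0, x, y}"
    and semicircle: "inv_pt x + inv_pt y = 2 * a"
    and circle_0xy: "{0, x, y} \<subseteq> sphere c rc"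
begin

abbreviation "u \<equiv> (cmod x)\<^sup>2"
abbreviation "w \<equiv> (cmod y)\<^sup>2"

lemma ra_nonneg: "ra \<ge> 0"
  using x_on by auto

lemma norm_c: "cmod c = rc"
  using circle_0xy by auto

lemma cross_x_y: "cross x y \<noteq> 0"
  using not_collinear collinear_0_iff_cross by blast

lemma x_ne_0: "x \<noteq> 0" and y_ne_0: "y \<noteq> 0"
  using cross_x_y by (auto simp: cross_complex)

lemma u_bounds: "0 < u" "u < 1" and w_bounds: "0 < w" "w < 1"
  using x_ne_0 y_ne_0 x_in y_in by (simp_all add: abs_square_less_1)

lemma u_eq: "u = 2 * (c \<bullet> x)" and w_eq: "w = 2 * (c \<bullet> y)"
  using circle_0xy sphere_through_0_inner by auto

lemma inner_x_y: "x \<bullet> y = u * w"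
proof -
  have "u + 1 = 2 * (a \<bullet> x)"
    using x_on mem_orthogonal_sphere[OF orth ra_nonneg] by simp
  also have "\<dots> = (inv_pt x + inv_pt y) \<bullet> x"
    unfolding semicircle by (simp add: inner_complex_def)
  also have "\<dots> = 1 + (x \<bullet> y) / w"
    using x_ne_0 by (simp add: inner_add_left inner_commute[of "inv_pt _"] inner_inv_pt_right
        power2_norm_eq_inner)
  finally show ?thesis
    using w_bounds by (simp add: field_simps)
qed

lemma inner_a_c: "2 * (a \<bullet> c) = 1"
proof -
  have "2 * (a \<bullet> c) = c \<bullet> inv_pt x + c \<bullet> inv_pt y"
    using semicircle by (simp add: inner_commute flip: inner_add_right) (simp add: inner_complex_def)
  then show ?thesis
    using inner_inv_pt_circle_through_0[OF x_ne_0 u_eq] inner_inv_pt_circle_through_0[OF y_ne_0 w_eq]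
    by simp
qed

lemma circles_orthogonal: "(cmod (a - c))\<^sup>2 = ra\<^sup>2 + rc\<^sup>2"
proof -
  have "(cmod (a - c))\<^sup>2 = (cmod a)\<^sup>2 - 2 * (a \<bullet> c) + (cmod c)\<^sup>2"
    by (simp add: cmod_power2 inner_complex_def) (simp add: power2_eq_square algebra_simps)
  then show ?thesis
    using orth inner_a_c norm_c by simp
qed

lemma cross_x_y_sq: "(cross x y)\<^sup>2 = u * w * (1 - u * w)"
proof -
  have "(cross x y)\<^sup>2 = (x \<bullet> x) * (y \<bullet> y) - (x \<bullet> y)\<^sup>2"
    using cross_mult_cross[of x y x y] by (simp add: power2_eq_square inner_commute)
  then show ?thesis
    by (simp add: inner_x_y power2_eq_square algebra_simps flip: power2_norm_eq_inner)
qed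

lemma circumradius_eq: "4 * rc\<^sup>2 * (1 - u * w) = u + w - 2 * u * w"
proof -
  have "c \<bullet> x = u / 2" "c \<bullet> y = w / 2" using u_eq w_eq by simp_all
  moreover have "rc\<^sup>2 * (cross x y)\<^sup>2
      = (c \<bullet> x)\<^sup>2 * w - 2 * (c \<bullet> x) * (c \<bullet> y) * (x \<bullet> y) + (c \<bullet> y)\<^sup>2 * u"
    unfolding norm_c[symmetric] by (simp add: cmod_power2 inner_complex_def cross_complex) algebra
  moreover note cross_x_y_sq
  ultimately have "rc\<^sup>2 * (u * w * (1 - u * w))
      = (u / 2)\<^sup>2 * w - 2 * (u / 2) * (w / 2) * (u * w) + (w / 2)\<^sup>2 * u"
    by (simp only: inner_x_y)
  also have "\<dots> = u * w * (u + w - 2 * u * w) / 4"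
    by (simp add: power2_eq_square field_simps)
  finally have "u * w * (4 * rc\<^sup>2 * (1 - u * w)) = u * w * (u + w - 2 * u * w)"
    by algebra
  then show ?thesis
    using u_bounds w_bounds by simp
qed

lemma circumradius_bounds: "0 < rc\<^sup>2" "4 * rc\<^sup>2 < 1"
proof -
  have "rc \<noteq> 0" using norm_c u_eq u_bounds by auto
  then show "0 < rc\<^sup>2" by simp
  have "4 * rc\<^sup>2 * (1 - u * w) = (1 - u * w) - (1 - u) * (1 - w)"
    using circumradius_eq by (simp add: algebra_simps)
  moreover have "0 < (1 - u) * (1 - w)" "u * w < 1"
    using u_bounds w_bounds mult_strict_mono[of u 1 w 1] by simp_all
  ultimately have "4 * rc\<^sup>2 * (1 - u * w) < 1 * (1 - u * w)" by simp
  then show "4 * rc\<^sup>2 < 1"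
    using \<open>u * w < 1\<close> mult_right_less_imp_less by fastforce
qed

lemma norm_line_point: "(cmod (t *\<^sub>R c))\<^sup>2 = t\<^sup>2 * rc\<^sup>2"
  by (simp add: norm_c power_mult_distrib)

lemma line_point_on_sphere: "t *\<^sub>R c \<in> sphere a ra \<longleftrightarrow> t\<^sup>2 * rc\<^sup>2 = t - 1"
proof -
  have "2 * (a \<bullet> t *\<^sub>R c) = t" using inner_a_c by (simp add: algebra_simps)
  then show ?thesis
    unfolding mem_orthogonal_sphere[OF orth ra_nonneg] norm_line_point by linarith
qed

lemma line_meets_sphere:
  "z \<in> affine hull {0, c} \<inter> sphere a ra \<longleftrightarrow> (\<exists>t. z = t *\<^sub>R c \<and> t\<^sup>2 * rc\<^sup>2 = t - 1)"
  using line_point_on_sphere by (auto simp: affine_hull_2_alt)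

lemma line_point_in_ball:
  assumes "t\<^sup>2 * rc\<^sup>2 = t - 1"
  shows "t *\<^sub>R c \<in> ball 0 1 \<longleftrightarrow> t < 2"
proof -
  have "t *\<^sub>R c \<in> ball 0 1 \<longleftrightarrow> (cmod (t *\<^sub>R c))\<^sup>2 < 1"
    by (simp add: abs_square_less_1)
  then show ?thesis
    using assms norm_line_point by simp
qed

lemma line_roots: "\<exists>t s. t\<^sup>2 * rc\<^sup>2 = t - 1 \<and> t < 2 \<and> s\<^sup>2 * rc\<^sup>2 = s - 1 \<and> 2 \<le> s"
proof (intro exI conjI)
  define q where "q = sqrt (1 - 4 * rc\<^sup>2)"
  have "0 < q" "q < 1" using circumradius_bounds by (simp_all add: q_def)
  show "(2 / (1 + q))\<^sup>2 * rc\<^sup>2 = 2 / (1 + q) - 1" "(2 / (1 - q))\<^sup>2 * rc\<^sup>2 = 2 / (1 - q) - 1"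
    using quadratic_roots[OF circumradius_bounds] by (simp_all add: q_def)
  show "2 / (1 + q) < 2" "2 \<le> 2 / (1 - q)"
    using \<open>0 < q\<close> \<open>q < 1\<close> by (simp_all add: divide_less_eq le_divide_eq)
qed


lemma cross_chord_line_point:
  "cross (y - x) (t *\<^sub>R c - x) * cross (y - x) (inv_pt x - x)
    = (1 - 1 / u) * (u * w / 2) * (t * (u + w - 2) + 2 * (1 - u * w))"
proof -
  define D where "D = cross x y"
  have D2: "D\<^sup>2 = u * w * (1 - u * w)"
    using cross_x_y_sq by (simp add: D_def)
  have K: "D * cross (y - x) c = u * w * (u + w - 2) / 2"
  proof -
    have c: "c \<bullet> x = u / 2" "c \<bullet> y = w / 2" using u_eq w_eq by simp_all
    have "D * cross (y - x) c = (x \<bullet> y - x \<bullet> x) * (c \<bullet> y) - (c \<bullet> x) * (y \<bullet> y - x \<bullet> y)"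
      using cross_mult_cross[of x y "y - x" c] by (simp add: D_def inner_diff_right inner_commute)
    also have "\<dots> = (u * w - u) * (w / 2) - (u / 2) * (w - u * w)"
      unfolding c inner_x_y power2_norm_eq_inner[symmetric] ..
    finally show ?thesis
      by (simp add: field_simps)
  qed
  have z: "cross (y - x) (t *\<^sub>R c - x) = t * cross (y - x) c + D"
    by (simp add: D_def cross_complex algebra_simps)
  have x': "cross (y - x) (inv_pt x - x) = (1 - 1 / u) * D"
    by (simp add: D_def inv_pt_scaleR cross_complex divide_inverse algebra_simps)
  have "cross (y - x) (t *\<^sub>R c - x) * cross (y - x) (inv_pt x - x)
      = (1 - 1 / u) * (t * (D * cross (y - x) c) + D\<^sup>2)"
    unfolding z x' by (simp add: power2_eq_square algebra_simps)
  also have "t * (D * cross (y - x) c) + D\<^sup>2 = (u * w / 2) * (t * (u + w - 2) + 2 * (1 - u * w))"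
    unfolding K D2 by (simp add: field_simps)
  finally show ?thesis
    by (simp only: mult.assoc)
qed

lemma line_point_in_hyp_seg:
  assumes "t\<^sup>2 * rc\<^sup>2 = t - 1" "t < 2"
  shows "t *\<^sub>R c \<in> hyp_seg a ra x y"
proof -
  have "t * (2 - u - w) \<le> 2 * (1 - u * w)"
    using small_root_bound[OF u_bounds w_bounds circumradius_eq assms] .
  then have "0 \<le> t * (u + w - 2) + 2 * (1 - u * w)"
    by (simp add: algebra_simps)
  moreover have "1 - 1 / u < 0" "0 < u * w / 2"
    using u_bounds w_bounds by simp_all
  ultimately have "cross (y - x) (t *\<^sub>R c - x) * cross (y - x) (inv_pt x - x) \<le> 0"
    unfolding cross_chord_line_point by (simp add: mult_nonpos_nonneg)
  then show ?thesis
    using line_point_on_sphere assms(1) by (simp add: hyp_seg_def)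
qed

lemma line_point_hyp_midpoint:
  assumes "t\<^sup>2 * rc\<^sup>2 = t - 1" "t < 2"
  shows "is_hyp_midpoint a ra x y (t *\<^sub>R c)"
proof -
  have "(cmod c)\<^sup>2 = rc\<^sup>2" by (simp add: norm_c)
  then have "hdist x (t *\<^sub>R c) = hdist y (t *\<^sub>R c)"
    using hdist_line_point x_in y_in u_eq w_eq assms(1) by simp
  then show ?thesis
    using line_point_in_hyp_seg[OF assms] hdist_commute by (simp add: is_hyp_midpoint_def)
qed

lemma abs_ratio_line_points_eq:
  assumes "t\<^sup>2 * rc\<^sup>2 = t - 1" "s\<^sup>2 * rc\<^sup>2 = s - 1"
  shows "abs_ratio (t *\<^sub>R c) x (inv_pt x) (s *\<^sub>R c) = abs_ratio (t *\<^sub>R c) y (inv_pt y) (s *\<^sub>R c)"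
  using abs_ratio_line_points[OF x_ne_0 x_in u_eq] abs_ratio_line_points[OF y_ne_0 y_in w_eq] assms
  by (simp add: norm_c)


lemma semicircle_conclusions:
  "(\<exists>z. z \<in> affine hull {0, c} \<inter> sphere a ra \<and> z \<in> ball 0 1) \<and>
   (\<exists>z'. z' \<in> affine hull {0, c} \<inter> sphere a ra \<and> z' \<notin> ball 0 1) \<and>
   (\<forall>z z'. z \<in> affine hull {0, c} \<inter> sphere a ra \<and> z \<in> ball 0 1 \<and>
           z' \<in> affine hull {0, c} \<inter> sphere a ra \<and> z' \<notin> ball 0 1 \<longrightarrow>
        is_hyp_midpoint a ra x y z \<and>
        abs_ratio z x (inv_pt x) z' = abs_ratio z y (inv_pt y) z') \<and>
   (cmod (a - c))\<^sup>2 = ra\<^sup>2 + rc\<^sup>2"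
proof (intro conjI allI impI)
  obtain t s where "t\<^sup>2 * rc\<^sup>2 = t - 1" "t < 2" "s\<^sup>2 * rc\<^sup>2 = s - 1" "2 \<le> s"
    using line_roots by blast
  then show "\<exists>z. z \<in> affine hull {0, c} \<inter> sphere a ra \<and> z \<in> ball 0 1"
    "\<exists>z'. z' \<in> affine hull {0, c} \<inter> sphere a ra \<and> z' \<notin> ball 0 1"
    using line_meets_sphere line_point_in_ball by (metis not_less)+
next
  fix z z'
  assume "z \<in> affine hull {0, c} \<inter> sphere a ra \<and> z \<in> ball 0 1 \<and>
    z' \<in> affine hull {0, c} \<inter> sphere a ra \<and> z' \<notin> ball 0 1"
  then obtain t s where "z = t *\<^sub>R c" "t\<^sup>2 * rc\<^sup>2 = t - 1" "t < 2"
    and "z' = s *\<^sub>R c" "s\<^sup>2 * rc\<^sup>2 = s - 1"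
    using line_meets_sphere line_point_in_ball by metis
  then show "is_hyp_midpoint a ra x y z"
    "abs_ratio z x (inv_pt x) z' = abs_ratio z y (inv_pt y) z'"
    using line_point_hyp_midpoint abs_ratio_line_points_eq by simp_all
qed (fact circles_orthogonal)

end

theorem proposition4p29:
  fixes x y a c xs ys :: complex and ra rc :: real
  assumes xB: "x \<in> ball 0 1 - {0}" and yB: "y \<in> ball 0 1 - {0}"
    and ncol: "\<not> collinear {0, x, y}"
    and neq: "cmod x \<noteq> cmod y"
    and circ_a: "{x, y, inv_pt x, inv_pt y} \<subseteq> sphere a ra"
    and xs_on: "xs \<in> sphere 0 1 \<inter> sphere a ra"
    and ys_on: "ys \<in> sphere 0 1 \<inter> sphere a ra"
    and xs_ne_ys: "xs \<noteq> ys"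
    and order_xs: "cross x xs * cross x y < 0"
    and order_ys: "cross y ys * cross y x < 0"
    and circ_c: "{0, x, y} \<subseteq> sphere c rc"
  shows
    "(inv_pt x + inv_pt y = 2 * a \<longrightarrow>
        (\<exists>z. z \<in> affine hull {0, c} \<inter> sphere a ra \<and> z \<in> ball 0 1) \<and>
        (\<exists>z'. z' \<in> affine hull {0, c} \<inter> sphere a ra \<and> z' \<notin> ball 0 1) \<and>
        (\<forall>z z'. z \<in> affine hull {0, c} \<inter> sphere a ra \<and> z \<in> ball 0 1 \<and>
                z' \<in> affine hull {0, c} \<inter> sphere a ra \<and> z' \<notin> ball 0 1 \<longrightarrow>
             is_hyp_midpoint a ra x y z \<and>
             abs_ratio z x (inv_pt x) z' = abs_ratio z y (inv_pt y) z') \<and>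
        (cmod (a - c))\<^sup>2 = ra\<^sup>2 + rc\<^sup>2)
     \<and> (\<forall>b d. b \<in> affine hull {xs, y} \<inter> affine hull {x, inv_pt y} \<and>
              d \<in> affine hull {inv_pt x, y} \<inter> affine hull {xs, inv_pt y} \<longrightarrow>
              collinear {0, b, d})
     \<and> (\<forall>b' d'. b' \<in> affine hull {x, ys} \<inter> affine hull {inv_pt x, y} \<and>
              d' \<in> affine hull {x, inv_pt y} \<inter> affine hull {inv_pt x, ys} \<longrightarrow>
              collinear {0, b', d'})"
proof -
  have x: "0 < cmod x" "cmod x < 1" and y: "0 < cmod y" "cmod y < 1" using xB yB by auto
  have orth: "(cmod a)\<^sup>2 = ra\<^sup>2 + 1"
    using sphere_orthogonal_unit_circle circ_a x by auto
  have semicircle: "semicircle_configuration a c x y ra rc" if "inv_pt x + inv_pt y = 2 * a"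
    using orth circ_a x y ncol that circ_c by unfold_locales auto
  have "cmod (inv_pt x) > 1" "cmod (inv_pt y) > 1" using x y by (simp_all add: norm_inv_pt one_less_inverse)
  moreover have "inv_pt xs = xs" "inv_pt ys = ys" "cmod xs = 1" "cmod ys = 1"
    using xs_on ys_on inv_pt_unit by auto
  moreover have "x \<noteq> y" using ncol by auto
  ultimately have distinct: "distinct [xs, y, x]" "x \<noteq> inv_pt y" "distinct [x, ys, inv_pt x]" "inv_pt x \<noteq> y"
    and inv_unit: "inv_pt xs = xs" "inv_pt ys = ys"
    using x y by auto
  have "collinear {0, b, d}"
    if "b \<in> affine hull {xs, y} \<inter> affine hull {x, inv_pt y}"
      "d \<in> affine hull {inv_pt x, y} \<inter> affine hull {xs, inv_pt y}" for b d
    using collinear_0_chord_intersections[OF orth _ distinct(1,2), of b d] that circ_a xs_on inv_unit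
    by (simp add: Int_commute)
  moreover have "collinear {0, b', d'}"
    if "b' \<in> affine hull {x, ys} \<inter> affine hull {inv_pt x, y}"
      "d' \<in> affine hull {x, inv_pt y} \<inter> affine hull {inv_pt x, ys}" for b' d'
    using collinear_0_chord_intersections[OF orth _ distinct(3,4), of b' d'] that circ_a ys_on inv_unit
    by (simp add: Int_commute)
  ultimately show ?thesis
    using semicircle semicircle_configuration.semicircle_conclusions by blast
qed

end
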